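(* Let $n\geq 2$, let $F_n$ be the free group with free basis $x_1,\dots,x_n$, let $\varphi\in\mathrm{Aut}(F_n)$, and let $G_\varphi=F_n\rtimes\langle t\rangle$ be the semidirect product with an infinite cyclic group $\langle t\rangle$ in which conjugation by $t$ induces $\varphi$ on $F_n$. Let $A\in\mathrm{GL}_n(\mathbb{Z})$ be the matrix of the automorphism of $F_n/F_n'\cong\mathbb{Z}^n$ induced by $\varphi$, and let $E$ be the $n\times n$ identity matrix. If $A-E\in\mathrm{GL}_n(\mathbb{Z})$, then $\bigcap_{i=1}^{\infty}\gamma_i(G_\varphi)=F_n$, and in particular $G_\varphi$ is not residually nilpotent.
   Context: $\gamma_i(G)$ denotes the $i$-th term of the lower central series of $G$: $\gamma_1(G)=G$, $\gamma_{i+1}(G)=[\gamma_i(G),G]$. $F_n'$ is the commutator subgroup of $F_n$. A group is residually nilpotent if the intersection of its lower central series is trivial. *)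

theory Defs
  imports "HOL-Algebra.Algebra" "Jordan_Normal_Form.Matrix"
begin

text \<open>Words over the letters x_i (True) and x_i^-1 (False).\<close>

fun reduced_word :: "(nat \<times> bool) list \<Rightarrow> bool" where
  "reduced_word [] = True"
| "reduced_word [a] = True"
| "reduced_word (a # b # w) = (\<not> (fst a = fst b \<and> snd a \<noteq> snd b) \<and> reduced_word (b # w))"

definition word_eval :: "('a, 'b) monoid_scheme \<Rightarrow> (nat \<Rightarrow> 'a) \<Rightarrow> (nat \<times> bool) list \<Rightarrow> 'a" where
  "word_eval G x w = foldr (\<lambda>(i, e) acc. (if e then x i else inv\<^bsub>G\<^esub> (x i)) \<otimes>\<^bsub>G\<^esub> acc) w \<one>\<^bsub>G\<^esub>"

definition free_basis :: "('a, 'b) monoid_scheme \<Rightarrow> 'a set \<Rightarrow> nat \<Rightarrow> (nat \<Rightarrow> 'a) \<Rightarrow> bool" where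
  "free_basis G F n x \<longleftrightarrow>
     subgroup F G \<and> (\<forall>i<n. x i \<in> F) \<and> inj_on x {..<n} \<and>
     F = generate G (x ` {..<n}) \<and>
     (\<forall>w. w \<noteq> [] \<and> reduced_word w \<and> (\<forall>l\<in>set w. fst l < n) \<longrightarrow> word_eval G x w \<noteq> \<one>\<^bsub>G\<^esub>)"

text \<open>Lower central series: lcs G 0 = gamma_1(G) = G, lcs G (Suc i) = [lcs G i, G].\<close>

fun lcs :: "('a, 'b) monoid_scheme \<Rightarrow> nat \<Rightarrow> 'a set" where
  "lcs G 0 = carrier G"
| "lcs G (Suc i) = generate G {a \<otimes>\<^bsub>G\<^esub> b \<otimes>\<^bsub>G\<^esub> inv\<^bsub>G\<^esub> a \<otimes>\<^bsub>G\<^esub> inv\<^bsub>G\<^esub> b | a b. a \<in> lcs G i \<and> b \<in> carrier G}"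

definition residually_nilpotent :: "('a, 'b) monoid_scheme \<Rightarrow> bool" where
  "residually_nilpotent G \<longleftrightarrow> (\<Inter>i. lcs G i) = {\<one>\<^bsub>G\<^esub>}"

definition basis_monomial :: "('a, 'b) monoid_scheme \<Rightarrow> nat \<Rightarrow> (nat \<Rightarrow> 'a) \<Rightarrow> (nat \<Rightarrow> int) \<Rightarrow> 'a" where
  "basis_monomial G n x a = foldr (\<lambda>i acc. (x i [^]\<^bsub>G\<^esub> a i) \<otimes>\<^bsub>G\<^esub> acc) [0..<n] \<one>\<^bsub>G\<^esub>"

text \<open>A is the matrix of the automorphism of F/F' = Z^n induced by phi, w.r.t. the
  images of the basis: column j records phi(x_j) modulo F'.\<close>

definition abelianization_matrix :: "('a, 'b) monoid_scheme \<Rightarrow> 'a set \<Rightarrow> nat \<Rightarrow> (nat \<Rightarrow> 'a) \<Rightarrow> ('a \<Rightarrow> 'a) \<Rightarrow> int mat \<Rightarrow> bool" where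
  "abelianization_matrix G F n x \<phi> A \<longleftrightarrow> A \<in> carrier_mat n n \<and>
     (\<forall>j<n. \<phi> (x j) \<otimes>\<^bsub>G\<^esub> inv\<^bsub>G\<^esub> (basis_monomial G n x (\<lambda>i. A $$ (i, j))) \<in> derived G F)"

end

theory Submission
  imports Defs
begin

text \<open>Let \<open>C = [F, G]\<close> be generated by the commutators of elements of \<open>F\<close> with elements
  of \<open>G\<close>. Then \<open>F/C\<close> is abelian and conjugation by \<open>t\<close> acts trivially on it, so the images
  \<open>y\<^sub>j\<close> of the basis satisfy \<open>y\<^sub>j = \<Prod>\<^sub>i y\<^sub>i\<^bsup>A\<^sub>i\<^sub>j\<^esup>\<close>, i.e. \<open>(A - E) y = 0\<close> in the \<open>\<int>\<close>-module \<open>F/C\<close>.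
  As \<open>A - E\<close> is invertible over \<open>\<int>\<close>, \<open>y = 0\<close>, that is \<open>F = [F, G]\<close>. By induction \<open>F\<close> lies in
  every \<open>\<gamma>\<^sub>i(G)\<close>, while \<open>\<gamma>\<^sub>2(G) \<subseteq> F\<close> because \<open>G/F\<close> is cyclic; and \<open>F \<noteq> 1\<close>.\<close>

lemma (in comm_group) finprod_int_pow:
  assumes "finite I" "y \<in> I \<rightarrow> carrier G"
  shows "(\<Otimes>i\<in>I. y i) [^] (c::int) = (\<Otimes>i\<in>I. y i [^] c)"
  using assms by (induction I rule: finite_induct) (simp_all add: int_pow_distrib Pi_def)

lemma (in comm_group) finprod_int_pow_add:
  assumes "y \<in> I \<rightarrow> carrier G"
  shows "(\<Otimes>i\<in>I. y i [^] (v i + w i :: int)) = (\<Otimes>i\<in>I. y i [^] v i) \<otimes> (\<Otimes>i\<in>I. y i [^] w i)"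
proof -
  have "(\<Otimes>i\<in>I. y i [^] (v i + w i)) = (\<Otimes>i\<in>I. y i [^] v i \<otimes> y i [^] w i)"
    using assms by (intro finprod_cong') (auto simp: int_pow_mult Pi_iff)
  then show ?thesis
    using assms by (simp add: Pi_def)
qed

lemma (in comm_group) finprod_int_pow_delta:
  assumes "finite I" "k \<in> I" "y \<in> I \<rightarrow> carrier G"
  shows "(\<Otimes>i\<in>I. y i [^] (if i = k then 1 else 0 :: int)) = y k"
proof -
  have "(\<Otimes>i\<in>I. y i [^] (if i = k then 1 else 0 :: int)) = (\<Otimes>i\<in>I. if k = i then y i else \<one>)"
    using assms(2,3) by (intro finprod_cong') (auto simp: Pi_iff)
  also have "\<dots> = y k"
    using assms by (intro finprod_singleton) auto
  finally show ?thesis .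
qed

lemma (in comm_group) finprod_int_pow_sum:
  assumes "finite I" "finite J" "y \<in> I \<rightarrow> carrier G"
  shows "(\<Otimes>i\<in>I. y i [^] (\<Sum>j\<in>J. M i j * c j :: int)) = (\<Otimes>j\<in>J. (\<Otimes>i\<in>I. y i [^] M i j) [^] c j)"
  using assms(2)
proof (induction J rule: finite_induct)
  case empty
  then show ?case by simp
next
  case (insert a J)
  have "(\<Otimes>i\<in>I. y i [^] (\<Sum>j\<in>insert a J. M i j * c j))
      = (\<Otimes>i\<in>I. y i [^] (M i a * c a)) \<otimes> (\<Otimes>i\<in>I. y i [^] (\<Sum>j\<in>J. M i j * c j))"
    using insert assms(3) by (simp add: finprod_int_pow_add)
  also have "(\<Otimes>i\<in>I. y i [^] (M i a * c a)) = (\<Otimes>i\<in>I. (y i [^] M i a) [^] c a)"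
    using assms(3) by (intro finprod_cong') (auto simp: int_pow_pow Pi_iff)
  also have "\<dots> = (\<Otimes>i\<in>I. y i [^] M i a) [^] c a"
    using assms(1,3) by (simp add: finprod_int_pow Pi_iff)
  finally show ?case
    using insert assms(3) by (simp add: Pi_def)
qed

lemma index_mult_mat_sum:
  assumes "M \<in> carrier_mat n n" "B \<in> carrier_mat n n" "i < n" "k < n"
  shows "(M * B) $$ (i, k) = (\<Sum>j<n. M $$ (i, j) * B $$ (j, k))"
  using assms by (auto simp: scalar_prod_def lessThan_atLeast0 intro!: sum.cong)

lemma invertible_mat_right_inverse:
  assumes "invertible_mat M" "M \<in> carrier_mat n n"
  obtains B where "B \<in> carrier_mat n n" "M * B = 1\<^sub>m n"
proof -
  obtain B where "M * B = 1\<^sub>m n" "B * M = 1\<^sub>m (dim_row B)"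
    using assms unfolding invertible_mat_def inverts_mat_def by auto
  moreover from this have "B \<in> carrier_mat n n"
    using assms(2) by (metis carrier_matD(2) carrier_matI index_mult_mat(3) index_one_mat(3))
  ultimately show thesis using that by blast
qed

lemma (in comm_group) fixed_vector_trivial:
  fixes A :: "int mat"
  assumes y: "y \<in> {..<n} \<rightarrow> carrier G" and A: "A \<in> carrier_mat n n"
    and inv: "invertible_mat (A - 1\<^sub>m n)"
    and fixed: "\<And>j. j < n \<Longrightarrow> (\<Otimes>i\<in>{..<n}. y i [^] A $$ (i, j)) = y j"
    and k: "k < n"
  shows "y k = \<one>"
proof -
  let ?M = "A - 1\<^sub>m n"
  have M: "?M \<in> carrier_mat n n" using A by (metis minus_carrier_mat one_carrier_mat)
  obtain B where B: "B \<in> carrier_mat n n" "?M * B = 1\<^sub>m n"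
    using invertible_mat_right_inverse[OF inv M] .
  have relation: "(\<Otimes>i\<in>{..<n}. y i [^] ?M $$ (i, j)) = \<one>" if j: "j < n" for j
  proof -
    have "y j = (\<Otimes>i\<in>{..<n}. y i [^] (?M $$ (i, j) + (if i = j then 1 else 0)))"
      unfolding fixed[OF j, symmetric] using A j y by (intro finprod_cong') (auto simp: Pi_iff)
    also have "\<dots> = (\<Otimes>i\<in>{..<n}. y i [^] ?M $$ (i, j)) \<otimes> y j"
      using y j by (simp add: finprod_int_pow_add finprod_int_pow_delta)
    finally have "\<one> \<otimes> y j = (\<Otimes>i\<in>{..<n}. y i [^] ?M $$ (i, j)) \<otimes> y j"
      using y j by (simp add: Pi_iff)
    then show ?thesis
      using y j by (subst (asm) r_cancel) (auto simp: Pi_iff)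
  qed
  have "y k = (\<Otimes>i\<in>{..<n}. y i [^] (if i = k then 1 else 0 :: int))"
    using y k by (intro finprod_int_pow_delta[symmetric]) auto
  also have "\<dots> = (\<Otimes>i\<in>{..<n}. y i [^] (\<Sum>j<n. ?M $$ (i, j) * B $$ (j, k)))"
    using B M k y by (intro finprod_cong')
      (auto simp: Pi_iff simp flip: index_mult_mat_sum simp del: index_minus_mat)
  also have "\<dots> = (\<Otimes>j\<in>{..<n}. (\<Otimes>i\<in>{..<n}. y i [^] ?M $$ (i, j)) [^] B $$ (j, k))"
    using y by (simp add: finprod_int_pow_sum)
  also have "\<dots> = \<one>"
    by (intro finprod_one_eqI) (simp add: relation del: index_minus_mat)
  finally show ?thesis .
qed

definition commutator_subgroup :: "('a, 'b) monoid_scheme \<Rightarrow> 'a set \<Rightarrow> 'a set \<Rightarrow> 'a set" where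
  "commutator_subgroup G H K =
     generate G {a \<otimes>\<^bsub>G\<^esub> b \<otimes>\<^bsub>G\<^esub> inv\<^bsub>G\<^esub> a \<otimes>\<^bsub>G\<^esub> inv\<^bsub>G\<^esub> b | a b. a \<in> H \<and> b \<in> K}"

lemma lcs_Suc_eq_commutator_subgroup:
  "lcs G (Suc i) = commutator_subgroup G (lcs G i) (carrier G)"
  by (simp add: commutator_subgroup_def)

lemma (in group) commutator_subgroup_mono:
  "H \<subseteq> H' \<Longrightarrow> commutator_subgroup G H K \<subseteq> commutator_subgroup G H' K"
  unfolding commutator_subgroup_def by (rule mono_generate) blast

lemma (in group) derived_subset_commutator_subgroup:
  "H \<subseteq> carrier G \<Longrightarrow> derived G H \<subseteq> commutator_subgroup G H (carrier G)"
  unfolding derived_def commutator_subgroup_def by (rule mono_generate) blast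

lemma (in group) derived_carrier_eq_lcs_1: "derived G (carrier G) = lcs G 1"
  unfolding derived_def by (simp add: setcompr_eq_image) (rule arg_cong[where f = "generate G"]; blast)

lemma (in normal) commutator_mem:
  assumes "a \<in> H" "b \<in> carrier G"
  shows "a \<otimes> b \<otimes> inv a \<otimes> inv b \<in> H"
proof -
  have "a \<otimes> (b \<otimes> inv a \<otimes> inv b) \<in> H"
    using assms by (intro subgroup.m_closed[OF subgroup_axioms] inv_op_closed2) auto
  then show ?thesis
    using assms by (simp add: m_assoc)
qed

lemma (in normal) commutator_subgroup_subset: "commutator_subgroup G H (carrier G) \<subseteq> H"
  unfolding commutator_subgroup_def
  by (rule generate_subgroup_incl) (auto intro: commutator_mem subgroup_axioms)

lemma (in normal) commutator_subgroup_normal: "commutator_subgroup G H (carrier G) \<lhd> G"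
  unfolding commutator_subgroup_def
proof (rule normal_generateI)
  show "{a \<otimes> b \<otimes> inv a \<otimes> inv b | a b. a \<in> H \<and> b \<in> carrier G} \<subseteq> carrier G"
    by auto
next
  fix c g assume "c \<in> {a \<otimes> b \<otimes> inv a \<otimes> inv b | a b. a \<in> H \<and> b \<in> carrier G}" and g: "g \<in> carrier G"
  then obtain a b where ab: "a \<in> H" "b \<in> carrier G" "c = a \<otimes> b \<otimes> inv a \<otimes> inv b"
    by auto
  have cancel: "inv g \<otimes> (g \<otimes> y) = y" if "y \<in> carrier G" for y
    using that g by (simp add: m_assoc[symmetric])
  let ?a = "g \<otimes> a \<otimes> inv g" and ?b = "g \<otimes> b \<otimes> inv g"
  have "g \<otimes> c \<otimes> inv g = ?a \<otimes> ?b \<otimes> inv ?a \<otimes> inv ?b"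
    using ab g by (simp add: m_assoc inv_mult_group cancel)
  moreover have "?a \<in> H" "?b \<in> carrier G"
    using ab g by (auto intro: inv_op_closed2)
  ultimately show "g \<otimes> c \<otimes> inv g \<in> {a \<otimes> b \<otimes> inv a \<otimes> inv b | a b. a \<in> H \<and> b \<in> carrier G}"
    by blast
qed

lemma (in subgroup) rcos_eq_if_mult_inv_mem:
  assumes "group G" "a \<in> carrier G" "b \<in> carrier G" "a \<otimes> inv b \<in> H"
  shows "H #> a = H #> b"
  using group.repr_independence[OF assms(1) rcos_module_rev[OF assms(1,3,2,4)] assms(3) subgroup_axioms]
  by simp

lemma (in normal) rcos_eq_self_iff:
  "a \<in> carrier G \<Longrightarrow> H #> a = H \<longleftrightarrow> a \<in> H"
  using rcos_self[of a H] coset_join2[of a H] subgroup_axioms by auto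

lemma (in normal) comm_group_Mod_if_derived_subset:
  assumes "derived G (carrier G) \<subseteq> H"
  shows "comm_group (G Mod H)"
proof (rule group.group_comm_groupI[OF factorgroup_is_group], simp add: FactGroup_def)
  fix U V assume "U \<in> rcosets H" "V \<in> rcosets H"
  then obtain a b where a: "a \<in> carrier G" "U = H #> a" and b: "b \<in> carrier G" "V = H #> b"
    unfolding RCOSETS_def by auto
  have "a \<otimes> b \<otimes> inv a \<otimes> inv b \<in> H"
    using assms a b unfolding derived_def by (blast intro: generate.incl)
  then have "(a \<otimes> b) \<otimes> inv (b \<otimes> a) \<in> H"
    using a b by (simp add: inv_mult_group m_assoc)
  then have "H #> (a \<otimes> b) = H #> (b \<otimes> a)"
    using a b by (intro rcos_eq_if_mult_inv_mem is_group) auto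
  then show "U <#> V = V <#> U"
    using a b by (simp add: rcos_sum)
qed

lemma (in normal) commutator_subgroup_normal_restrict:
  "commutator_subgroup G H (carrier G) \<lhd> G\<lparr>carrier := H\<rparr>"
  using commutator_subgroup_normal commutator_subgroup_subset
  by (intro normal_restrict_supergroup subgroup_axioms)

lemma (in normal) comm_group_Mod_commutator_subgroup:
  "comm_group (G\<lparr>carrier := H\<rparr> Mod commutator_subgroup G H (carrier G))"
proof (rule normal.comm_group_Mod_if_derived_subset[OF commutator_subgroup_normal_restrict])
  show "derived (G\<lparr>carrier := H\<rparr>) (carrier (G\<lparr>carrier := H\<rparr>)) \<subseteq> commutator_subgroup G H (carrier G)"
    using derived_consistent[OF _ subgroup_axioms] derived_subset_commutator_subgroup[OF subset] by simp
qed

lemma (in normal) mult_inv_conj_mem_commutator_subgroup: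
  assumes f: "f \<in> H" and g: "g \<in> carrier G"
  shows "f \<otimes> inv (g \<otimes> f \<otimes> inv g) \<in> commutator_subgroup G H (carrier G)"
proof -
  have "f \<otimes> g \<otimes> inv f \<otimes> inv g \<in> commutator_subgroup G H (carrier G)"
    unfolding commutator_subgroup_def using f g by (blast intro: generate.incl)
  moreover have "f \<in> carrier G"
    using f subset by auto
  ultimately show ?thesis
    using g by (simp add: m_assoc inv_mult_group)
qed

lemma (in normal) comm_group_Mod_if_cyclic_quotient:
  assumes t: "t \<in> carrier G" and G: "carrier G = {f \<otimes> t [^] (k::int) | f k. f \<in> H}"
  shows "comm_group (G Mod H)"
proof (rule group.group_comm_groupI[OF factorgroup_is_group], simp add: FactGroup_def)
  have coset_power: "\<exists>k::int. U = H #> t [^] k" if U: "U \<in> rcosets H" for U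
  proof -
    obtain a where a: "a \<in> carrier G" and U_eq: "U = H #> a"
      using U unfolding RCOSETS_def by auto
    obtain f k where f: "f \<in> H" and a_eq: "a = f \<otimes> t [^] (k::int)"
      using a G by auto
    have "U = (H #> f) #> t [^] k"
      using f t U_eq a_eq by (simp add: coset_mult_assoc subset)
    also have "\<dots> = H #> t [^] k"
      using f subgroup_axioms by (simp add: coset_join2 subset)
    finally show ?thesis ..
  qed
  fix U V assume "U \<in> rcosets H" "V \<in> rcosets H"
  then obtain k m :: int where "U = H #> t [^] k" "V = H #> t [^] m"
    using coset_power by meson
  moreover have "t [^] k \<otimes> t [^] m = t [^] m \<otimes> t [^] k"
    using t by (simp add: add.commute flip: int_pow_mult)
  ultimately show "U <#> V = V <#> U"
    using t by (simp add: rcos_sum)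
qed

lemma (in group) basis_monomial_closed:
  "x ` {..<n} \<subseteq> carrier G \<Longrightarrow> basis_monomial G n x v \<in> carrier G"
proof -
  assume x: "x ` {..<n} \<subseteq> carrier G"
  have closed: "set is \<subseteq> {..<n} \<Longrightarrow> foldr (\<lambda>i acc. x i [^] v i \<otimes> acc) is \<one> \<in> carrier G" for "is"
    using x by (induction "is") auto
  show ?thesis
    unfolding basis_monomial_def by (intro closed) auto
qed

lemma (in group) basis_monomial_subgroup:
  assumes "subgroup F G" "x ` {..<n} \<subseteq> F"
  shows "basis_monomial (G\<lparr>carrier := F\<rparr>) n x v = basis_monomial G n x v"
  unfolding basis_monomial_def using assms
  by (intro foldr_cong) (auto simp: int_pow_consistent)

lemma (in group_hom) hom_basis_monomial:
  assumes H: "comm_group H" and x: "x ` {..<n} \<subseteq> carrier G"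
  shows "h (basis_monomial G n x v) = (\<Otimes>\<^bsub>H\<^esub>i\<in>{..<n}. h (x i) [^]\<^bsub>H\<^esub> v i)"
proof -
  interpret H: comm_group H by fact
  have "set is \<subseteq> {..<n} \<Longrightarrow> distinct is \<Longrightarrow>
      h (foldr (\<lambda>i acc. x i [^] v i \<otimes> acc) is \<one>) = (\<Otimes>\<^bsub>H\<^esub>i\<in>set is. h (x i) [^]\<^bsub>H\<^esub> v i)" for "is"
  proof (induction "is")
    case (Cons i "is")
    moreover have "foldr (\<lambda>i acc. x i [^] v i \<otimes> acc) is \<one> \<in> carrier G"
      using Cons.prems x by (induction "is") auto
    ultimately show ?case
      using x by (simp add: hom_int_pow Pi_iff subset_iff)
  qed simp
  then show ?thesis
    unfolding basis_monomial_def by (simp add: atLeast0LessThan)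
qed

lemma (in group_hom) hom_derived_eq_one:
  assumes "comm_group H" "a \<in> derived G (carrier G)"
  shows "h a = \<one>\<^bsub>H\<^esub>"
proof -
  have "h a \<in> derived H (h ` carrier G)"
    using assms(2) by (simp add: derived_img)
  moreover have "h ` carrier G \<subseteq> carrier H"
    by auto
  ultimately show ?thesis
    using comm_group.derived_eq_singleton[OF assms(1)] by blast
qed

lemma (in group_hom) hom_eq_if_mult_inv_eq_one:
  assumes "a \<in> carrier G" "b \<in> carrier G" "h (a \<otimes> inv b) = \<one>\<^bsub>H\<^esub>"
  shows "h a = h b"
proof -
  have "a = a \<otimes> inv b \<otimes> b"
    using assms by (simp add: G.m_assoc)
  then have "h a = h (a \<otimes> inv b) \<otimes>\<^bsub>H\<^esub> h b"
    using assms by (metis G.inv_closed G.m_closed hom_mult)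
  then show ?thesis
    using assms by simp
qed

lemma invariant_hom_kills_basis:
  assumes "group G" and F: "subgroup F G" and x: "x ` {..<n} \<subseteq> F"
    and A: "abelianization_matrix G F n x \<phi> A" and inv: "invertible_mat (A - 1\<^sub>m n)"
    and "comm_group K" and h: "h \<in> hom (G\<lparr>carrier := F\<rparr>) K"
    and invariant: "\<And>f. f \<in> F \<Longrightarrow> \<phi> f \<in> F \<and> h (\<phi> f) = h f"
    and k: "k < n"
  shows "h (x k) = \<one>\<^bsub>K\<^esub>"
proof -
  interpret G: group G by fact
  interpret K: comm_group K by fact
  define FG where "FG = G\<lparr>carrier := F\<rparr>"
  have FG [simp]: "carrier FG = F" "monoid.mult FG = monoid.mult G" "monoid.one FG = monoid.one G"
    unfolding FG_def by simp_all
  have FG_inv [simp]: "inv\<^bsub>FG\<^esub> a = inv\<^bsub>G\<^esub> a" if "a \<in> F" for a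
    unfolding FG_def using G.m_inv_consistent[OF F that] .
  interpret FG: group FG
    unfolding FG_def by (rule G.subgroup_imp_group[OF F])
  interpret h: group_hom FG K h
    using h unfolding FG_def
    by (intro group_hom.intro group_hom_axioms.intro FG.is_group[unfolded FG_def] K.is_group)
  have relation: "(\<Otimes>\<^bsub>K\<^esub>i\<in>{..<n}. h (x i) [^]\<^bsub>K\<^esub> A $$ (i, j)) = h (x j)" if j: "j < n" for j
  proof -
    define m where "m = basis_monomial G n x (\<lambda>i. A $$ (i, j))"
    have m_FG: "m = basis_monomial FG n x (\<lambda>i. A $$ (i, j))"
      unfolding m_def FG_def using G.basis_monomial_subgroup[OF F x] by simp
    have m: "m \<in> F"
      unfolding m_FG using FG.basis_monomial_closed x by simp
    have xj: "x j \<in> F" "\<phi> (x j) \<in> F"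
      using x j invariant by auto
    have "\<phi> (x j) \<otimes>\<^bsub>G\<^esub> inv\<^bsub>G\<^esub> m \<in> derived FG (carrier FG)"
      using A j G.derived_consistent[OF _ F, of F]
      unfolding abelianization_matrix_def m_def FG_def by simp
    then have "h (\<phi> (x j)) = h m"
      using xj m by (intro h.hom_eq_if_mult_inv_eq_one h.hom_derived_eq_one K.comm_group_axioms) auto
    then show ?thesis
      using x xj invariant h.hom_basis_monomial[OF K.comm_group_axioms] by (simp add: m_FG)
  qed
  show ?thesis
    using A inv relation x k h.hom_closed unfolding abelianization_matrix_def
    by (intro K.fixed_vector_trivial[of "\<lambda>i. h (x i)" n A]) auto
qed

lemma subset_commutator_subgroup_if_fixed_point_free:
  assumes "group G" and "F \<lhd> G" and gen: "F = generate G (x ` {..<n})"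
    and t: "t \<in> carrier G" and conj: "\<forall>g\<in>F. t \<otimes>\<^bsub>G\<^esub> g \<otimes>\<^bsub>G\<^esub> inv\<^bsub>G\<^esub> t = \<phi> g"
    and A: "abelianization_matrix G F n x \<phi> A" and inv: "invertible_mat (A - 1\<^sub>m n)"
  shows "F \<subseteq> commutator_subgroup G F (carrier G)"
proof -
  interpret G: group G by fact
  interpret F: normal F G by fact
  define C where "C = commutator_subgroup G F (carrier G)"
  define FG where "FG = G\<lparr>carrier := F\<rparr>"
  define \<pi> where "\<pi> a = C #>\<^bsub>FG\<^esub> a" for a
  have x: "x ` {..<n} \<subseteq> F"
    unfolding gen by (auto intro: generate.incl)
  interpret FG: group FG
    unfolding FG_def by (rule G.subgroup_imp_group[OF F.subgroup_axioms])
  interpret C: normal C FG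
    unfolding C_def FG_def by (rule F.commutator_subgroup_normal_restrict)
  have \<phi>_eq: "\<phi> f = t \<otimes>\<^bsub>G\<^esub> f \<otimes>\<^bsub>G\<^esub> inv\<^bsub>G\<^esub> t" if "f \<in> F" for f
    using conj that by simp
  have \<phi>_closed: "\<phi> f \<in> F" if "f \<in> F" for f
    unfolding \<phi>_eq[OF that] using that t by (rule F.inv_op_closed2[rotated])
  have \<pi>_\<phi>: "\<pi> (\<phi> f) = \<pi> f" if "f \<in> F" for f
  proof -
    have "f \<otimes>\<^bsub>G\<^esub> inv\<^bsub>G\<^esub> \<phi> f \<in> C"
      unfolding C_def \<phi>_eq[OF that] using that t by (rule F.mult_inv_conj_mem_commutator_subgroup)
    then have "\<pi> f = \<pi> (\<phi> f)"
      unfolding \<pi>_def FG_def using that \<phi>_closed[OF that] F.subgroup_axioms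
      by (intro C.rcos_eq_if_mult_inv_mem[unfolded FG_def] FG.is_group[unfolded FG_def])
        (auto simp: G.m_inv_consistent)
    then show ?thesis ..
  qed
  have "x k \<in> C" if k: "k < n" for k
  proof -
    have "\<pi> (x k) = \<one>\<^bsub>FG Mod C\<^esub>"
      unfolding \<pi>_def FG_def
      by (rule invariant_hom_kills_basis[OF assms(1) F.subgroup_axioms x A inv
            F.comm_group_Mod_commutator_subgroup[folded C_def] C.r_coset_hom_Mod[unfolded FG_def] _ k])
        (use \<phi>_closed \<pi>_\<phi> in \<open>auto simp: \<pi>_def FG_def\<close>)
    then show ?thesis
      unfolding \<pi>_def using x k C.rcos_eq_self_iff[of "x k"] by (auto simp: FG_def)
  qed
  then have "generate G (x ` {..<n}) \<subseteq> C"
    unfolding C_def using F.commutator_subgroup_normal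
    by (intro G.generate_subgroup_incl) (auto simp: normal_def)
  then show ?thesis
    unfolding C_def gen[symmetric] .
qed

theorem proposition2p3:
  fixes G :: "('a, 'b) monoid_scheme" and F :: "'a set" and n :: nat
    and x :: "nat \<Rightarrow> 'a" and \<phi> :: "'a \<Rightarrow> 'a" and t :: 'a and A :: "int mat"
  assumes "group G" and "n \<ge> 2"
    and "free_basis G F n x"
    and "\<phi> \<in> iso (G\<lparr>carrier := F\<rparr>) (G\<lparr>carrier := F\<rparr>)"
    and "F \<lhd> G"
    and "t \<in> carrier G"
    and "\<forall>k::int. k \<noteq> 0 \<longrightarrow> t [^]\<^bsub>G\<^esub> k \<noteq> \<one>\<^bsub>G\<^esub>"
    and "\<forall>k::int. t [^]\<^bsub>G\<^esub> k \<in> F \<longrightarrow> k = 0"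
    and "carrier G = {f \<otimes>\<^bsub>G\<^esub> (t [^]\<^bsub>G\<^esub> (k::int)) | f k. f \<in> F}"
    and "\<forall>g\<in>F. t \<otimes>\<^bsub>G\<^esub> g \<otimes>\<^bsub>G\<^esub> inv\<^bsub>G\<^esub> t = \<phi> g"
    and "abelianization_matrix G F n x \<phi> A"
    and "invertible_mat (A - 1\<^sub>m n)"
  shows "(\<Inter>i. lcs G i) = F \<and> \<not> residually_nilpotent G"
proof -
  interpret G: group G by fact
  interpret F: normal F G by fact
  have gen: "F = generate G (x ` {..<n})" and x0: "x 0 \<in> F"
    and free: "word_eval G x [(0, True)] \<noteq> \<one>\<^bsub>G\<^esub>"
    using assms(2,3) unfolding free_basis_def by auto
  have F_commutator: "F \<subseteq> commutator_subgroup G F (carrier G)"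
    by (rule subset_commutator_subgroup_if_fixed_point_free[OF assms(1,5) gen assms(6,10-12)])
  have "F \<subseteq> lcs G i" for i
  proof (induction i)
    case (Suc i)
    have "commutator_subgroup G F (carrier G) \<subseteq> lcs G (Suc i)"
      unfolding lcs_Suc_eq_commutator_subgroup by (rule G.commutator_subgroup_mono[OF Suc])
    then show ?case
      using F_commutator by blast
  qed (use F.subset in simp)
  moreover have "lcs G 1 \<subseteq> F"
    using G.derived_minimal[OF assms(5) F.comm_group_Mod_if_cyclic_quotient[OF assms(6,9)]]
    by (simp add: G.derived_carrier_eq_lcs_1)
  ultimately have "(\<Inter>i. lcs G i) = F"
    by blast
  moreover have "x 0 \<noteq> \<one>\<^bsub>G\<^esub>"
    using free x0 F.subset by (auto simp: word_eval_def)
  ultimately show ?thesis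
    using x0 unfolding residually_nilpotent_def by auto
qed

end
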